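(* Let $k\ge 2$ and let $m_1<m_2<\dots<m_k$ be positive integers. Then the complete $k$-partite graph $K_{m_1,m_2,\dots,m_k}$ satisfies $IDI(K_{m_1,m_2,\dots,m_k})=m_k$.
   Context: $K_{m_1,\dots,m_k}$ is the complete $k$-partite graph whose parts have sizes $m_1,\dots,m_k$. For a finite simple connected graph $G=(V,E)$ with diameter $d$, a rank assignment is a function $f:V\to\mathbb{R}$; under $f$, the string of a vertex $v$ is the $d$-vector whose $i$-th coordinate is the sum of $f(w)$ over all vertices $w$ with $d(v,w)=i$. The ID-index $IDI(G)$ is the minimum $k$ such that there exists $f:V\to\mathbb{R}$ with $|f(V)|=k$ under which all vertices have distinct strings. *)

theory Defs
  imports Complex_Main
begin

text \<open>A finite simple graph is given by a vertex set V and a symmetric,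
irreflexive adjacency relation E (only its restriction to V matters).\<close>

definition is_walk :: "'a set \<Rightarrow> ('a \<Rightarrow> 'a \<Rightarrow> bool) \<Rightarrow> 'a list \<Rightarrow> bool" where
  "is_walk V E p \<longleftrightarrow> p \<noteq> [] \<and> set p \<subseteq> V \<and>
     (\<forall>i. Suc i < length p \<longrightarrow> E (p ! i) (p ! Suc i))"

definition gdist :: "'a set \<Rightarrow> ('a \<Rightarrow> 'a \<Rightarrow> bool) \<Rightarrow> 'a \<Rightarrow> 'a \<Rightarrow> nat" where
  "gdist V E u v = (LEAST n. \<exists>p. is_walk V E p \<and> hd p = u \<and> last p = v \<and> length p = Suc n)"

definition gdiam :: "'a set \<Rightarrow> ('a \<Rightarrow> 'a \<Rightarrow> bool) \<Rightarrow> nat" where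
  "gdiam V E = Max {gdist V E u v | u v. u \<in> V \<and> v \<in> V}"

text \<open>The string of v under the rank assignment f: the d-vector whose i-th
coordinate (i = 1..d) is the sum of f(w) over vertices w at distance i from v.\<close>
definition vstring :: "'a set \<Rightarrow> ('a \<Rightarrow> 'a \<Rightarrow> bool) \<Rightarrow> ('a \<Rightarrow> real) \<Rightarrow> 'a \<Rightarrow> real list" where
  "vstring V E f v = map (\<lambda>i. \<Sum>w\<in>{w\<in>V. gdist V E v w = i}. f w) [1..<Suc (gdiam V E)]"

definition IDI :: "'a set \<Rightarrow> ('a \<Rightarrow> 'a \<Rightarrow> bool) \<Rightarrow> nat" where
  "IDI V E = (LEAST k. \<exists>f :: 'a \<Rightarrow> real. card (f ` V) = k \<and> inj_on (vstring V E f) V)"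

text \<open>Complete k-partite graph K_{m_1,...,m_k}: vertex (i,j) is the j-th vertex
(j < m i) of part i (1 \<le> i \<le> k); two vertices are adjacent iff in different parts.\<close>
definition multipartite_V :: "nat \<Rightarrow> (nat \<Rightarrow> nat) \<Rightarrow> (nat \<times> nat) set" where
  "multipartite_V k m = {(i, j). 1 \<le> i \<and> i \<le> k \<and> j < m i}"

definition multipartite_E :: "(nat \<times> nat) \<Rightarrow> (nat \<times> nat) \<Rightarrow> bool" where
  "multipartite_E x y \<longleftrightarrow> fst x \<noteq> fst y"

end

theory Submission
  imports Defs
begin

text \<open>In a complete multipartite graph with at least two nonempty parts, two distinct vertices
are at distance 1 if they lie in different parts and at distance 2 otherwise. Hence, once some
part has two vertices, the string of a vertex v of part i under f is (S - P i, P i - f v), where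
S is the total rank and P i the rank of part i. Two vertices of the same part with equal rank
therefore have equal strings, so a separating f is injective on every part and takes at least
m k values. Conversely, ranking the j-th vertex of every part by j uses exactly m k values;
the part sums m i (m i - 1) / 2 are pairwise distinct because the part sizes are, so the first
coordinate of a string determines the part and the second one the vertex.\<close>

lemma gdist_less_length:
  assumes "is_walk V E p"
  shows "gdist V E (hd p) (last p) < length p"
proof -
  have "gdist V E (hd p) (last p) \<le> length p - 1"
    unfolding gdist_def by (rule Least_le) (use assms in \<open>auto simp: is_walk_def\<close>)
  then show ?thesis using assms by (cases p) (auto simp: is_walk_def)
qed

lemma shortest_walk:
  assumes "is_walk V E p"
  obtains q where "is_walk V E q" "hd q = hd p" "last q = last p"
    "length q = Suc (gdist V E (hd p) (last p))"
proof -
  have "\<exists>n q. is_walk V E q \<and> hd q = hd p \<and> last q = last p \<and> length q = Suc n"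
    using assms by (auto simp: is_walk_def intro!: exI[of _ "length p - 1"])
  from LeastI_ex[OF this] show ?thesis
    using that unfolding gdist_def by blast
qed

lemma gdist_eq_0_imp_eq:
  assumes "is_walk V E p" "gdist V E (hd p) (last p) = 0"
  shows "hd p = last p"
proof -
  obtain q where q: "is_walk V E q" "hd q = hd p" "last q = last p"
    "length q = Suc (gdist V E (hd p) (last p))"
    by (rule shortest_walk[OF assms(1)])
  then obtain x where "q = [x]" using assms(2) by (cases q) auto
  then show ?thesis using q by simp
qed

lemma gdist_eq_1_imp_adjacent:
  assumes "is_walk V E p" "gdist V E (hd p) (last p) = 1"
  shows "E (hd p) (last p)"
proof -
  obtain q where q: "is_walk V E q" "hd q = hd p" "last q = last p"
    "length q = Suc (gdist V E (hd p) (last p))"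
    by (rule shortest_walk[OF assms(1)])
  then obtain x y where "q = [x, y]" using assms(2)
    by (metis One_nat_def Suc_length_conv length_0_conv)
  then show ?thesis using q by (auto simp: is_walk_def)
qed

lemma gdist_self: "u \<in> V \<Longrightarrow> gdist V E u u = 0"
  using gdist_less_length[of V E "[u]"] by (simp add: is_walk_def)

lemma gdist_eq_1:
  assumes "u \<in> V" "v \<in> V" "u \<noteq> v" "E u v"
  shows "gdist V E u v = 1"
proof -
  have walk: "is_walk V E [u, v]"
    using assms by (simp add: is_walk_def less_Suc_eq)
  have "gdist V E u v < 2" using gdist_less_length[OF walk] by simp
  moreover have "gdist V E u v \<noteq> 0" using gdist_eq_0_imp_eq[OF walk] assms(3) by auto
  ultimately show ?thesis by linarith
qed

lemma gdist_eq_2: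
  assumes "u \<in> V" "v \<in> V" "w \<in> V" "u \<noteq> v" "\<not> E u v" "E u w" "E w v"
  shows "gdist V E u v = 2"
proof -
  have walk: "is_walk V E [u, w, v]"
    using assms by (auto simp: is_walk_def less_Suc_eq nth_Cons split: nat.split)
  have "gdist V E u v < 3" using gdist_less_length[OF walk] by simp
  moreover have "gdist V E u v \<noteq> 0" using gdist_eq_0_imp_eq[OF walk] assms(4) by auto
  moreover have "gdist V E u v \<noteq> 1" using gdist_eq_1_imp_adjacent[OF walk] assms(5) by auto
  ultimately show ?thesis by linarith
qed

lemma strict_mono_on_atLeastAtMost_Suc:
  fixes f :: "nat \<Rightarrow> 'b::order"
  assumes "\<And>i. a \<le> i \<Longrightarrow> i < b \<Longrightarrow> f i < f (Suc i)"
  shows "strict_mono_on {a..b} f"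
proof (rule strict_mono_onI)
  fix i j assume "i \<in> {a..b}" "j \<in> {a..b}" "i < j"
  then have "Suc i \<le> j" "a \<le> i" "j \<le> b" by auto
  then show "f i < f j"
  proof (induction j rule: dec_induct)
    case base then show ?case using assms by simp
  next
    case (step n) then show ?case using assms[of n] by simp
  qed
qed

lemma sum_lessThan_real_strict_mono:
  assumes "0 < n" "n < n'"
  shows "(\<Sum>j<n. real j) < (\<Sum>j<n'. real j)"
proof -
  have "(\<Sum>j<n. real j) < (\<Sum>j<Suc n. real j)" using assms(1) by simp
  also have "\<dots> \<le> (\<Sum>j<n'. real j)" using assms(2) by (intro sum_mono2) auto
  finally show ?thesis .
qed

lemma sum_lessThan_real_inj:
  assumes "0 < n" "0 < n'" "(\<Sum>j<n. real j) = (\<Sum>j<n'. real j)"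
  shows "n = n'"
  using sum_lessThan_real_strict_mono[of n n'] sum_lessThan_real_strict_mono[of n' n] assms
  by (metis less_irrefl nat_neq_iff)

locale complete_multipartite =
  fixes k :: nat and m :: "nat \<Rightarrow> nat"
  assumes two_parts: "2 \<le> k"
    and part_nonempty: "\<And>i. 1 \<le> i \<Longrightarrow> i \<le> k \<Longrightarrow> 0 < m i"
begin

abbreviation V :: "(nat \<times> nat) set" where "V \<equiv> multipartite_V k m"

lemma finite_V: "finite V"
proof -
  have "V = Sigma {1..k} (\<lambda>i. {..<m i})" by (auto simp: multipartite_V_def)
  then show ?thesis by simp
qed

lemma part_eq_image: "i \<in> {1..k} \<Longrightarrow> {w \<in> V. fst w = i} = (\<lambda>j. (i, j)) ` {..<m i}"
  by (auto simp: multipartite_V_def)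

lemma sum_part: "i \<in> {1..k} \<Longrightarrow> (\<Sum>w \<in> {w \<in> V. fst w = i}. f w) = (\<Sum>j<m i. f (i, j))"
  by (simp add: part_eq_image sum.reindex inj_on_def)

lemma gdist_multipartite:
  assumes "u \<in> V" "v \<in> V"
  shows "gdist V multipartite_E u v = (if u = v then 0 else if fst u = fst v then 2 else 1)"
proof -
  define i where "i = (if fst u = 1 then 2 else 1 :: nat)"
  have w: "(i, 0) \<in> V" "i \<noteq> fst u"
    using two_parts part_nonempty by (auto simp: i_def multipartite_V_def)
  consider "u = v" | "u \<noteq> v" "fst u = fst v" | "fst u \<noteq> fst v" by blast
  then show ?thesis
  proof cases
    case 1 then show ?thesis using assms gdist_self by simp
  next
    case 2 then show ?thesis
      using assms w gdist_eq_2[of u _ v "(i, 0)"] by (simp add: multipartite_E_def)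
  next
    case 3 then show ?thesis
      using assms gdist_eq_1[of u _ v multipartite_E] by (auto simp: multipartite_E_def)
  qed
qed

lemma gdiam_multipartite:
  assumes "i \<in> {1..k}" "2 \<le> m i"
  shows "gdiam V multipartite_E = 2"
proof -
  let ?D = "{gdist V multipartite_E u v | u v. u \<in> V \<and> v \<in> V}"
  have le: "d \<le> 2" if "d \<in> ?D" for d
  proof -
    from that obtain u v where "u \<in> V" "v \<in> V" "d = gdist V multipartite_E u v" by blast
    then show ?thesis using gdist_multipartite by simp
  qed
  then have "?D \<subseteq> {..2}" by blast
  then have fin: "finite ?D" by (rule finite_subset) simp
  have "(i, 0) \<in> V" "(i, 1) \<in> V"
    using assms by (auto simp: multipartite_V_def)
  then have two: "2 \<in> ?D" using gdist_multipartite[of "(i, 0)" "(i, 1)"] by force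
  show ?thesis
    unfolding gdiam_def by (rule Max_eqI[OF fin le two])
qed

lemma vstring_multipartite:
  assumes "i \<in> {1..k}" "2 \<le> m i" "v \<in> V"
  shows "vstring V multipartite_E f v =
    [(\<Sum>w\<in>V. f w) - (\<Sum>j<m (fst v). f (fst v, j)), (\<Sum>j<m (fst v). f (fst v, j)) - f v]"
proof -
  let ?P = "{w \<in> V. fst w = fst v}"
  have "fst v \<in> {1..k}" using assms(3) by (auto simp: multipartite_V_def)
  moreover have "{w \<in> V. gdist V multipartite_E v w = 1} = V - ?P"
    and "{w \<in> V. gdist V multipartite_E v w = 2} = ?P - {v}"
    using gdist_multipartite[OF assms(3)] by (auto split: if_splits)
  ultimately show ?thesis
    using assms finite_V
    by (simp add: vstring_def gdiam_multipartite numeral_2_eq_2 sum_diff sum_diff1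
        flip: sum_part)
qed

lemma card_image_ge_part_size:
  assumes separating: "inj_on (vstring V multipartite_E f) V" and i: "i \<in> {1..k}"
  shows "m i \<le> card (f ` V)"
proof (cases "m i \<le> 1")
  case True
  have "(i, 0) \<in> V" using i part_nonempty by (auto simp: multipartite_V_def)
  then have "0 < card (f ` V)" using finite_V by (auto simp: card_gt_0_iff)
  then show ?thesis using True by linarith
next
  case False
  let ?P = "(\<lambda>j. (i, j)) ` {..<m i}"
  have P_sub: "?P \<subseteq> V" using i by (auto simp: multipartite_V_def)
  have "inj_on f ?P"
  proof (rule inj_onI)
    fix v w assume P: "v \<in> ?P" "w \<in> ?P" and same_rank: "f v = f w"
    then have V: "v \<in> V" "w \<in> V" and "fst v = fst w" using P_sub by auto
    moreover have "2 \<le> m i" using False by simp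
    ultimately have "vstring V multipartite_E f v = vstring V multipartite_E f w"
      using same_rank by (simp add: vstring_multipartite[OF i])
    then show "v = w" using inj_onD[OF separating] V by blast
  qed
  then have "card (f ` ?P) = card ?P" by (rule card_image)
  also have "\<dots> = m i" by (subst card_image) (auto simp: inj_on_def)
  finally have "card (f ` ?P) = m i" .
  moreover have "card (f ` ?P) \<le> card (f ` V)"
    using P_sub finite_V by (intro card_mono) auto
  ultimately show ?thesis by simp
qed

lemma card_image_snd_rank:
  assumes "i0 \<in> {1..k}" "\<And>i. i \<in> {1..k} \<Longrightarrow> m i \<le> m i0"
  shows "card ((\<lambda>v. real (snd v)) ` V) = m i0"
proof -
  have "(\<lambda>v. real (snd v)) ` V = real ` {..<m i0}"
    using assms by (force simp: multipartite_V_def image_iff)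
  then show ?thesis by (simp add: card_image)
qed

lemma snd_rank_separating:
  assumes distinct_sizes: "inj_on m {1..k}"
  shows "inj_on (vstring V multipartite_E (\<lambda>v. real (snd v))) V"
proof -
  obtain i where i: "i \<in> {1..k}" "2 \<le> m i"
  proof -
    have "m 1 \<noteq> m 2" using distinct_sizes two_parts by (auto dest: inj_onD)
    then show ?thesis
      using that[of 1] that[of 2] part_nonempty[of 1] part_nonempty[of 2] two_parts by force
  qed
  show ?thesis
  proof (rule inj_onI)
    fix v w assume v: "v \<in> V" and w: "w \<in> V"
      and eq: "vstring V multipartite_E (\<lambda>v. real (snd v)) v =
               vstring V multipartite_E (\<lambda>v. real (snd v)) w"
    have parts: "fst v \<in> {1..k}" "fst w \<in> {1..k}"
      using v w by (auto simp: multipartite_V_def)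
    have "(\<Sum>j<m (fst v). real j) = (\<Sum>j<m (fst w). real j)"
      and ranks: "real (snd v) = real (snd w)"
      using eq by (simp_all add: vstring_multipartite[OF i] v w)
    then have "m (fst v) = m (fst w)"
      using parts part_nonempty by (intro sum_lessThan_real_inj) auto
    then have "fst v = fst w" using parts distinct_sizes by (auto dest: inj_onD)
    then show "v = w" using ranks by (simp add: prod_eq_iff)
  qed
qed

end

theorem mainTheorem12:
  fixes k :: nat and m :: "nat \<Rightarrow> nat"
  assumes "k \<ge> 2"
    and "\<And>i. 1 \<le> i \<Longrightarrow> i \<le> k \<Longrightarrow> m i > 0"
    and "\<And>i. 1 \<le> i \<Longrightarrow> i < k \<Longrightarrow> m i < m (Suc i)"
  shows "IDI (multipartite_V k m) multipartite_E = m k"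
proof -
  interpret complete_multipartite k m
    using assms(1,2) by unfold_locales auto
  have mono: "strict_mono_on {1..k} m"
    using assms(3) by (rule strict_mono_on_atLeastAtMost_Suc)
  have k: "k \<in> {1..k}" using assms(1) by simp
  have "card ((\<lambda>v. real (snd v)) ` V) = m k"
    using k mono by (intro card_image_snd_rank) (auto intro: strict_mono_on_leD)
  moreover have "inj_on (vstring V multipartite_E (\<lambda>v. real (snd v))) V"
    using mono by (intro snd_rank_separating strict_mono_on_imp_inj_on)
  ultimately show ?thesis
    unfolding IDI_def using card_image_ge_part_size[OF _ k]
    by (intro Least_equality) blast+
qed

end
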